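(* Let $G$ be a finite graph with $n\ge1$ vertices, each of degree at least $1$. Take $r=n+1$, $V=\mathbb{C}^{n+1}$, $B=I_{n+1}$, $x_j=e^{2\pi\sqrt{-1}\,j/n}$ for $j=1,\dots,n$, and $t=0$, and let $\mathcal{A}=\{A_1,A_2,\dots\}$ be given by $A_1^i=t$ if $i=n+1$ and $0$ otherwise, and for $d\ge2$: $A_d^{i_1\dots i_d}=x_i$ if $(i_1,\dots,i_d)$ is a permutation of $(i,i,n+1,\dots,n+1)$ with $i\in\{1,\dots,n\}$, $=t$ if $(i_1,\dots,i_d)=(n+1,\dots,n+1)$, and $0$ otherwise. Then the number of Hamiltonian cycles of $G$ equals $\frac1n\,\mathcal{F}_{\mathcal{A},I_{n+1}}(G)$.
   Context: $\mathcal{F}_{\mathcal{A},B}(G)=\sum_{c:H\to\{1,\dots,r\}}\prod_{\{h,h'\}\in E(G)}B_{c(h)c(h')}\prod_{k}A_{d_k}^{c(h_{k,1})\dots c(h_{k,d_k})}$, where $H$ is the set of half-edges of $G$ (two per edge, loops included) and $h_{k,1},\dots,h_{k,d_k}$ are the half-edges at vertex $v_k$ of degree $d_k$; i.e. a copy of $A_{d_k}$ is placed at each vertex and contracted along edges using $B$. A cycle of $G$ is a $2$-valent subgraph (every vertex in it has degree $2$ within it, loops counted twice); a Hamiltonian cycle is a connected cycle with $n=|V(G)|$ edges. *)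

theory Defs
  imports "HOL-Analysis.Analysis"
begin

text \<open>A finite multigraph (loops and parallel edges allowed) on the vertex set
  {0..<n} (vertex v_k is k-1): a finite set E of edge identifiers and a map
  ends giving the two endpoints of each edge.\<close>

definition multigraph :: "nat \<Rightarrow> 'e set \<Rightarrow> ('e \<Rightarrow> nat \<times> nat) \<Rightarrow> bool" where
  "multigraph n E ends \<longleftrightarrow> finite E \<and> (\<forall>e\<in>E. fst (ends e) < n \<and> snd (ends e) < n)"

definition half_edges :: "'e set \<Rightarrow> ('e \<times> bool) set" where
  "half_edges E = E \<times> (UNIV :: bool set)"

definition hvert :: "('e \<Rightarrow> nat \<times> nat) \<Rightarrow> 'e \<times> bool \<Rightarrow> nat" where
  "hvert ends h = (if snd h then snd (ends (fst h)) else fst (ends (fst h)))"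

definition halves_at :: "'e set \<Rightarrow> ('e \<Rightarrow> nat \<times> nat) \<Rightarrow> nat \<Rightarrow> ('e \<times> bool) set" where
  "halves_at E ends v = {h \<in> half_edges E. hvert ends h = v}"

text \<open>Degree of v within the edge set E (loops counted twice).\<close>
definition deg :: "'e set \<Rightarrow> ('e \<Rightarrow> nat \<times> nat) \<Rightarrow> nat \<Rightarrow> nat" where
  "deg E ends v = card (halves_at E ends v)"

definition halves_list :: "('e::linorder) set \<Rightarrow> ('e \<Rightarrow> nat \<times> nat) \<Rightarrow> nat \<Rightarrow> ('e \<times> bool) list" where
  "halves_list E ends v =
     concat (map (\<lambda>e. filter (\<lambda>h. hvert ends h = v) [(e, False), (e, True)])
                 (sorted_list_of_set E))"

text \<open>The partition function F_{A,B}(G).  The ordering h_{k,1},...,h_{k,d_k}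
  of the half-edges at a vertex is fixed as the sorted order.  Colours are 1..r.\<close>
definition partition_fn ::
  "nat \<Rightarrow> (nat \<Rightarrow> nat list \<Rightarrow> complex) \<Rightarrow> (nat \<Rightarrow> nat \<Rightarrow> complex) \<Rightarrow>
   nat \<Rightarrow> ('e::linorder) set \<Rightarrow> ('e \<Rightarrow> nat \<times> nat) \<Rightarrow> complex" where
  "partition_fn r A B n E ends =
     (\<Sum>c \<in> (half_edges E \<rightarrow>\<^sub>E {1..r}).
        (\<Prod>e\<in>E. B (c (e, False)) (c (e, True))) *
        (\<Prod>v\<in>{0..<n}. A (deg E ends v)
            (map c (halves_list E ends v))))"

definition edge_verts :: "'e set \<Rightarrow> ('e \<Rightarrow> nat \<times> nat) \<Rightarrow> nat set" where
  "edge_verts C ends = (\<Union>e\<in>C. {fst (ends e), snd (ends e)})"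

definition is_cycle :: "'e set \<Rightarrow> ('e \<Rightarrow> nat \<times> nat) \<Rightarrow> 'e set \<Rightarrow> bool" where
  "is_cycle E ends C \<longleftrightarrow> C \<subseteq> E \<and> (\<forall>v\<in>edge_verts C ends. deg C ends v = 2)"

definition adj_rel :: "'e set \<Rightarrow> ('e \<Rightarrow> nat \<times> nat) \<Rightarrow> (nat \<times> nat) set" where
  "adj_rel C ends = {(a, b). \<exists>e\<in>C. ends e = (a, b) \<or> ends e = (b, a)}"

definition edges_connected :: "'e set \<Rightarrow> ('e \<Rightarrow> nat \<times> nat) \<Rightarrow> bool" where
  "edges_connected C ends \<longleftrightarrow>
     (\<forall>u\<in>edge_verts C ends. \<forall>v\<in>edge_verts C ends. (u, v) \<in> (adj_rel C ends)\<^sup>*)"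

definition is_ham_cycle :: "nat \<Rightarrow> 'e set \<Rightarrow> ('e \<Rightarrow> nat \<times> nat) \<Rightarrow> 'e set \<Rightarrow> bool" where
  "is_ham_cycle n E ends C \<longleftrightarrow>
     is_cycle E ends C \<and> edges_connected C ends \<and> finite C \<and> card C = n"

definition A_fam :: "nat \<Rightarrow> (nat \<Rightarrow> complex) \<Rightarrow> complex \<Rightarrow> nat \<Rightarrow> nat list \<Rightarrow> complex" where
  "A_fam n x t d is =
     (if d = 1 then (if is = [n+1] then t else 0)
      else if d \<ge> 2 then
        (if (\<exists>i\<in>{1..n}. mset is = mset (i # i # replicate (d - 2) (n+1)))
         then x (THE i. i \<in> {1..n} \<and> mset is = mset (i # i # replicate (d - 2) (n+1)))
         else if is = replicate d (n+1) then t else 0)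
      else 0)"

definition Id_mat :: "nat \<Rightarrow> nat \<Rightarrow> complex" where
  "Id_mat i j = (if i = j then 1 else 0)"

end

theory Submission
  imports Defs
begin

text \<open>Since \<open>B\<close> is the identity, only colourings that agree on the two halves of every edge
  survive, so \<open>F\<close> becomes a sum over colourings of the edges by \<open>1..n+1\<close>.  With \<open>t = 0\<close> a
  vertex contributes \<open>x\<^sub>i\<close> when exactly two of its half-edges carry the same ordinary colour \<open>i\<close>
  and all others the special colour \<open>n+1\<close>, and \<open>0\<close> otherwise.  Hence the edges \<open>S\<close> with
  ordinary colours form a spanning 2-regular subgraph whose components are coloured constantly.
  If \<open>S\<close> is connected, i.e. a Hamiltonian cycle, each of its \<open>n\<close> constant colourings contributes
  \<open>x\<^sub>i\<^sup>n = 1\<close>.  If \<open>S\<close> is disconnected, rotating the colours \<open>i \<mapsto> i + 1 mod n\<close> on the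
  component of vertex \<open>0\<close> permutes the colourings and multiplies every weight by \<open>x\<^sub>1\<^sup>k\<close>, where
  \<open>0 < k < n\<close> is the size of that component; as \<open>x\<^sub>1\<^sup>k \<noteq> 1\<close>, their sum vanishes.\<close>

section \<open>Half-edges and Hamiltonian cycles\<close>

lemma halves_list_eq_filter_product:
  "halves_list E ends v
     = filter (\<lambda>h. hvert ends h = v) (List.product (sorted_list_of_set E) [False, True])"
  unfolding halves_list_def product_concat_map filter_concat by (simp add: comp_def)

lemma set_halves_list: "finite E \<Longrightarrow> set (halves_list E ends v) = halves_at E ends v"
  by (auto simp: halves_list_eq_filter_product halves_at_def half_edges_def)

lemma distinct_halves_list: "distinct (halves_list E ends v)"
  by (simp add: halves_list_eq_filter_product distinct_product)

lemma finite_halves_at: "finite S \<Longrightarrow> finite (halves_at S ends v)"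
  by (simp add: halves_at_def half_edges_def)

lemma mem_halves_at:
  "(e, b) \<in> halves_at S ends v \<longleftrightarrow> e \<in> S \<and> v = (if b then snd (ends e) else fst (ends e))"
  by (auto simp: halves_at_def half_edges_def hvert_def)

lemma halves_at_endpoint:
  "h \<in> halves_at S ends v \<Longrightarrow> fst h \<in> S \<and> (v = fst (ends (fst h)) \<or> v = snd (ends (fst h)))"
  by (cases h) (auto simp: mem_halves_at)

lemma multigraph_subset: "multigraph n E ends \<Longrightarrow> S \<subseteq> E \<Longrightarrow> multigraph n S ends"
  unfolding multigraph_def by (blast intro: finite_subset)

lemma sum_deg_eq_twice_card:
  assumes "finite C" and "finite T" and "hvert ends ` half_edges C \<subseteq> T"
  shows "(\<Sum>v\<in>T. deg C ends v) = 2 * card C"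
proof -
  have "(\<Sum>v\<in>T. deg C ends v) = (\<Sum>v\<in>T. \<Sum>h\<in>{h \<in> half_edges C. hvert ends h = v}. 1)"
    by (simp add: deg_def halves_at_def)
  also have "\<dots> = card (half_edges C)"
    using assms by (subst sum.group) (auto simp: half_edges_def)
  also have "\<dots> = 2 * card C" by (simp add: half_edges_def card_cartesian_product)
  finally show ?thesis .
qed

lemma is_ham_cycle_iff:
  assumes mg: "multigraph n E ends"
  shows "is_ham_cycle n E ends C \<longleftrightarrow> C \<subseteq> E \<and> (\<forall>v<n. deg C ends v = 2) \<and> edges_connected C ends"
proof -
  have handshake: "(\<Sum>v\<in>T. deg C ends v) = 2 * card C"
    if "finite C" "finite T" "edge_verts C ends \<subseteq> T" for T
    using sum_deg_eq_twice_card that by (fastforce simp: half_edges_def hvert_def edge_verts_def)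
  have verts_lt: "edge_verts C ends \<subseteq> {0..<n}" if "C \<subseteq> E"
    using mg that by (auto simp: multigraph_def edge_verts_def)
  show ?thesis
  proof
    assume "is_ham_cycle n E ends C"
    then have "C \<subseteq> E" and two: "\<forall>v\<in>edge_verts C ends. deg C ends v = 2"
      and "edges_connected C ends" "finite C" "card C = n"
      by (auto simp: is_ham_cycle_def is_cycle_def)
    moreover have "finite (edge_verts C ends)" using \<open>finite C\<close> by (simp add: edge_verts_def)
    ultimately have "2 * card (edge_verts C ends) = 2 * n"
      using handshake[of "edge_verts C ends"] by simp
    then have "edge_verts C ends = {0..<n}"
      using verts_lt[OF \<open>C \<subseteq> E\<close>] by (intro card_subset_eq) auto
    then show "C \<subseteq> E \<and> (\<forall>v<n. deg C ends v = 2) \<and> edges_connected C ends"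
      using \<open>C \<subseteq> E\<close> two \<open>edges_connected C ends\<close> by auto
  next
    assume "C \<subseteq> E \<and> (\<forall>v<n. deg C ends v = 2) \<and> edges_connected C ends"
    then have "C \<subseteq> E" and two: "\<forall>v<n. deg C ends v = 2" and "edges_connected C ends" by auto
    moreover have "finite C" using mg \<open>C \<subseteq> E\<close> finite_subset by (auto simp: multigraph_def)
    moreover have "card C = n" using handshake[OF \<open>finite C\<close> _ verts_lt[OF \<open>C \<subseteq> E\<close>]] two by simp
    ultimately show "is_ham_cycle n E ends C"
      using verts_lt by (auto simp: is_ham_cycle_def is_cycle_def)
  qed
qed

section \<open>The vertex tensors as weights of colour pairs\<close>

lemma pair_eq_pair_iff: "{#i, i#} = {#j, j#} \<longleftrightarrow> i = j"
proof
  assume "{#i, i#} = {#j, j#}"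
  then have "i \<in># {#j, j#}" by (metis union_single_eq_member)
  then show "i = j" by simp
qed simp

definition pair_weight :: "('c \<Rightarrow> 'a::zero) \<Rightarrow> 'c multiset \<Rightarrow> 'a" where
  "pair_weight x M = (if \<exists>i. M = {#i, i#} then x (THE i. M = {#i, i#}) else 0)"

lemma pair_weight_double [simp]: "pair_weight x {#i, i#} = x i"
  unfolding pair_weight_def pair_eq_pair_iff by auto

lemma pair_weight_nonzeroD: "pair_weight x M \<noteq> 0 \<Longrightarrow> \<exists>i. M = {#i, i#}"
  unfolding pair_weight_def by meson

lemma pair_weight_image_mset:
  assumes inj: "inj_on \<sigma> (set_mset M)" and scaled: "\<And>i. i \<in># M \<Longrightarrow> y (\<sigma> i) = c * x i"
  shows "pair_weight y (image_mset \<sigma> M) = c * (pair_weight x M :: 'a::mult_zero)"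
proof (cases "\<exists>i. M = {#i, i#}")
  case True
  then show ?thesis using scaled by auto
next
  case False
  have "image_mset (inv_into (set_mset M) \<sigma>) (image_mset \<sigma> M) = M"
    using inj by (simp add: image_mset.compositionality multiset.map_ident_strong)
  then have "\<not> (\<exists>j. image_mset \<sigma> M = {#j, j#})"
    using False by (metis image_mset_add_mset image_mset_single)
  then show ?thesis using False unfolding pair_weight_def by simp
qed

lemma image_mset_mset_set_eq_pair_iff:
  assumes "finite P"
  shows "image_mset g (mset_set P) = {#i, i#} \<longleftrightarrow> card P = 2 \<and> (\<forall>p\<in>P. g p = i)"
proof
  assume pair: "image_mset g (mset_set P) = {#i, i#}"
  have "size (image_mset g (mset_set P)) = 2" unfolding pair by simp
  then have "card P = 2" by simp
  moreover have "g p = i" if "p \<in> P" for p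
  proof -
    have "g p \<in># image_mset g (mset_set P)" using that assms by simp
    then show ?thesis using pair by simp
  qed
  ultimately show "card P = 2 \<and> (\<forall>p\<in>P. g p = i)" by blast
next
  assume "card P = 2 \<and> (\<forall>p\<in>P. g p = i)"
  moreover obtain p q where "P = {p, q}" "p \<noteq> q" using calculation by (meson card_2_iff)
  ultimately show "image_mset g (mset_set P) = {#i, i#}" by auto
qed

lemma mset_eq_pair_replicate_iff:
  fixes M :: "nat multiset"
  assumes range: "set_mset M \<subseteq> {1..n+1}" and "i \<le> n"
  shows "M = mset (i # i # replicate (size M - 2) (n+1)) \<longleftrightarrow> filter_mset (\<lambda>c. c \<le> n) M = {#i, i#}"
proof
  assume "M = mset (i # i # replicate (size M - 2) (n+1))"
  then have "filter_mset (\<lambda>c. c \<le> n) M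
      = mset (filter (\<lambda>c. c \<le> n) (i # i # replicate (size M - 2) (n+1)))"
    by (simp only: mset_filter)
  then show "filter_mset (\<lambda>c. c \<le> n) M = {#i, i#}"
    using \<open>i \<le> n\<close> by (simp add: filter_replicate)
next
  assume small: "filter_mset (\<lambda>c. c \<le> n) M = {#i, i#}"
  have M: "M = filter_mset (\<lambda>c. c \<le> n) M + filter_mset (\<lambda>c. \<not> c \<le> n) M"
    by (simp add: multiset_partition)
  have "size (filter_mset (\<lambda>c. \<not> c \<le> n) M) = size M - 2"
    using arg_cong[OF M, of size] small by simp
  moreover have "set_mset (filter_mset (\<lambda>c. \<not> c \<le> n) M) \<subseteq> {n+1}" using range by auto
  ultimately have "filter_mset (\<lambda>c. \<not> c \<le> n) M = replicate_mset (size M - 2) (n+1)"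
    by (metis set_mset_subset_singletonD)
  then show "M = mset (i # i # replicate (size M - 2) (n+1))" using M small by simp
qed

lemma A_fam_eq_pair_weight:
  assumes range: "set l \<subseteq> {1..n+1}"
  shows "A_fam n x 0 (length l) l = pair_weight x (filter_mset (\<lambda>c. c \<le> n) (mset l))"
proof -
  define P where "P = filter_mset (\<lambda>c. c \<le> n) (mset l)"
  have pair_iff: "mset l = mset (i # i # replicate (length l - 2) (n+1)) \<longleftrightarrow> P = {#i, i#}"
    if "i \<le> n" for i
    using mset_eq_pair_replicate_iff[of "mset l" n i] range that unfolding P_def by simp
  have pair_colour: "i \<in> {1..n}" if "P = {#i, i#}" for i
  proof -
    have "i \<in># P" using that by simp
    then show ?thesis using range unfolding P_def by auto
  qed
  show ?thesis
  proof (cases "\<exists>i. P = {#i, i#}")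
    case True
    then obtain i where i: "P = {#i, i#}" by blast
    have len: "2 \<le> length l"
      using size_filter_mset_lesseq[of "\<lambda>c. c \<le> n" "mset l"] i unfolding P_def by simp
    have the_colour: "(THE j. j \<in> {1..n} \<and> mset l = mset (j # j # replicate (length l - 2) (n+1))) = i"
    proof (rule the_equality)
      fix j assume j: "j \<in> {1..n} \<and> mset l = mset (j # j # replicate (length l - 2) (n+1))"
      then have "P = {#j, j#}" using pair_iff[of j] by simp
      then have "{#i, i#} = {#j, j#}" using i by simp
      then show "j = i" by (simp add: pair_eq_pair_iff)
    qed (use i pair_iff pair_colour in simp)
    have ex: "\<exists>j\<in>{1..n}. mset l = mset (j # j # replicate (length l - 2) (n+1))"
      using pair_colour[OF i] pair_iff[of i] i by auto
    have "length l \<noteq> 1" using len by simp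
    then show ?thesis unfolding A_fam_def P_def[symmetric] i
      by (simp only: if_False if_P[OF len] if_P[OF ex] the_colour pair_weight_double)
  next
    case False
    then have "\<not> (\<exists>i\<in>{1..n}. mset l = mset (i # i # replicate (length l - 2) (n+1)))"
      using pair_iff by auto
    then show ?thesis using False unfolding A_fam_def pair_weight_def P_def[symmetric] by auto
  qed
qed

section \<open>Reduction to colourings of spanning subgraphs\<close>

lemma prod_Id_mat:
  "finite E \<Longrightarrow> (\<Prod>e\<in>E. Id_mat (c (e, False)) (c (e, True)))
     = (if \<forall>e\<in>E. c (e, False) = c (e, True) then 1 else 0)"
  by (induction E rule: finite_induct) (auto simp: Id_mat_def)

lemma bij_betw_edge_colourings:
  "bij_betw (\<lambda>f. restrict (\<lambda>h. f (fst h)) (half_edges E)) (E \<rightarrow>\<^sub>E R)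
     {c \<in> half_edges E \<rightarrow>\<^sub>E R. \<forall>e\<in>E. c (e, False) = c (e, True)}"
proof (rule bij_betw_byWitness[where f' = "\<lambda>c. restrict (\<lambda>e. c (e, False)) E"])
  show "\<forall>c\<in>{c \<in> half_edges E \<rightarrow>\<^sub>E R. \<forall>e\<in>E. c (e, False) = c (e, True)}.
          restrict (\<lambda>h. restrict (\<lambda>e. c (e, False)) E (fst h)) (half_edges E) = c"
    by (auto simp: half_edges_def PiE_def extensional_def fun_eq_iff) (metis (full_types))
qed (auto simp: half_edges_def PiE_def extensional_def fun_eq_iff)

lemma partition_fn_Id_mat:
  assumes "finite E"
  shows "partition_fn r A Id_mat n E ends =
    (\<Sum>f\<in>E \<rightarrow>\<^sub>E {1..r}. \<Prod>v\<in>{0..<n}.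
        A (deg E ends v) (map (\<lambda>h. f (fst h)) (halves_list E ends v)))"
proof -
  define H where "H = half_edges E"
  define vertex_part where "vertex_part c = (\<Prod>v\<in>{0..<n}. A (deg E ends v) (map c (halves_list E ends v)))"
    for c :: "'a \<times> bool \<Rightarrow> nat"
  have "partition_fn r A Id_mat n E ends
      = (\<Sum>c\<in>H \<rightarrow>\<^sub>E {1..r}. if \<forall>e\<in>E. c (e, False) = c (e, True) then vertex_part c else 0)"
    unfolding partition_fn_def vertex_part_def H_def prod_Id_mat[OF assms] by (intro sum.cong) auto
  also have "\<dots> = (\<Sum>c\<in>{c \<in> H \<rightarrow>\<^sub>E {1..r}. \<forall>e\<in>E. c (e, False) = c (e, True)}. vertex_part c)"
    by (rule sum.inter_filter[symmetric]) (simp add: H_def half_edges_def assms finite_PiE)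
  also have "\<dots> = (\<Sum>f\<in>E \<rightarrow>\<^sub>E {1..r}. vertex_part (restrict (\<lambda>h. f (fst h)) H))"
    unfolding H_def by (rule sum.reindex_bij_betw[OF bij_betw_edge_colourings, symmetric])
  also have "\<dots> = (\<Sum>f\<in>E \<rightarrow>\<^sub>E {1..r}. \<Prod>v\<in>{0..<n}.
        A (deg E ends v) (map (\<lambda>h. f (fst h)) (halves_list E ends v)))"
    unfolding vertex_part_def H_def using set_halves_list[OF assms]
    by (intro sum.cong prod.cong arg_cong[where f = "A _"] map_cong refl) (auto simp: halves_at_def)
  finally show ?thesis .
qed

definition extend_colouring :: "nat \<Rightarrow> 'e set \<Rightarrow> 'e set \<Rightarrow> ('e \<Rightarrow> nat) \<Rightarrow> 'e \<Rightarrow> nat" where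
  "extend_colouring n E S f e = (if e \<in> S then f e else if e \<in> E then n + 1 else undefined)"

lemma bij_betw_extend_colouring:
  assumes "S \<subseteq> E"
  shows "bij_betw (extend_colouring n E S) (S \<rightarrow>\<^sub>E {1..n})
           {f \<in> E \<rightarrow>\<^sub>E {1..n+1}. {e \<in> E. f e \<le> n} = S}"
proof (rule bij_betw_byWitness[where f' = "\<lambda>f. restrict f S"])
  show "extend_colouring n E S ` (S \<rightarrow>\<^sub>E {1..n}) \<subseteq> {f \<in> E \<rightarrow>\<^sub>E {1..n+1}. {e \<in> E. f e \<le> n} = S}"
    using assms by (auto simp: extend_colouring_def PiE_def Pi_def extensional_def split: if_splits)
qed (use assms in \<open>auto simp: extend_colouring_def PiE_def Pi_def extensional_def fun_eq_iff\<close>)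

lemma sum_PiE_split_special_colour:
  assumes "finite E"
  shows "(\<Sum>f\<in>E \<rightarrow>\<^sub>E {1..n+1}. g f) = (\<Sum>S\<in>Pow E. \<Sum>f\<in>S \<rightarrow>\<^sub>E {1..n}. g (extend_colouring n E S f))"
proof -
  have "(\<Sum>f\<in>E \<rightarrow>\<^sub>E {1..n+1}. g f) = (\<Sum>S\<in>Pow E. \<Sum>f\<in>{f \<in> E \<rightarrow>\<^sub>E {1..n+1}. {e \<in> E. f e \<le> n} = S}. g f)"
    by (rule sum.group[symmetric]) (auto simp: assms finite_PiE)
  also have "\<dots> = (\<Sum>S\<in>Pow E. \<Sum>f\<in>S \<rightarrow>\<^sub>E {1..n}. g (extend_colouring n E S f))"
    by (intro sum.cong refl sum.reindex_bij_betw[symmetric] bij_betw_extend_colouring) simp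
  finally show ?thesis .
qed

definition colours_at :: "'e set \<Rightarrow> ('e \<Rightarrow> nat \<times> nat) \<Rightarrow> ('e \<Rightarrow> 'c) \<Rightarrow> nat \<Rightarrow> 'c multiset" where
  "colours_at S ends f v = image_mset (\<lambda>h. f (fst h)) (mset_set (halves_at S ends v))"

definition colouring_weight ::
  "('c \<Rightarrow> 'a::comm_semiring_1) \<Rightarrow> nat \<Rightarrow> 'e set \<Rightarrow> ('e \<Rightarrow> nat \<times> nat) \<Rightarrow> ('e \<Rightarrow> 'c) \<Rightarrow> 'a" where
  "colouring_weight x n S ends f = (\<Prod>v\<in>{0..<n}. pair_weight x (colours_at S ends f v))"

lemma A_fam_extend_colouring:
  fixes E :: "'e::linorder set"
  assumes fin: "finite E" and "S \<subseteq> E" and f: "f \<in> S \<rightarrow>\<^sub>E {1..n}"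
  shows "A_fam n x 0 (deg E ends v)
           (map (\<lambda>h. extend_colouring n E S f (fst h)) (halves_list E ends v))
         = pair_weight x (colours_at S ends f v)"
proof -
  define g where "g h = extend_colouring n E S f (fst h)" for h :: "'e \<times> bool"
  define l where "l = map g (halves_list E ends v)"
  have mset_l: "mset l = image_mset g (mset_set (halves_at E ends v))"
    unfolding l_def using distinct_halves_list set_halves_list[OF fin] by (metis mset_map mset_set_set)
  have "deg E ends v = length l"
    unfolding l_def deg_def using distinct_halves_list set_halves_list[OF fin] by (metis distinct_card length_map)
  moreover have "set l \<subseteq> {1..n+1}"
    using f \<open>S \<subseteq> E\<close> set_halves_list[OF fin]
    by (auto simp: l_def g_def extend_colouring_def halves_at_def half_edges_def PiE_def Pi_def)
  moreover have "filter_mset (\<lambda>c. c \<le> n) (mset l) = colours_at S ends f v"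
  proof -
    have "{h \<in> halves_at E ends v. g h \<le> n} = halves_at S ends v"
      using f \<open>S \<subseteq> E\<close> by (auto simp: g_def extend_colouring_def halves_at_def half_edges_def PiE_def Pi_def)
    then have "filter_mset (\<lambda>c. c \<le> n) (mset l) = image_mset g (mset_set (halves_at S ends v))"
      unfolding mset_l filter_mset_image_mset using finite_halves_at[OF fin] by simp
    also have "\<dots> = colours_at S ends f v"
    proof -
      have "finite S" using fin \<open>S \<subseteq> E\<close> by (rule finite_subset[rotated])
      moreover have "g h = f (fst h)" if "h \<in> halves_at S ends v" for h
        using that by (auto simp: g_def extend_colouring_def halves_at_def half_edges_def)
      ultimately show ?thesis
        unfolding colours_at_def by (intro image_mset_cong) (simp add: finite_halves_at)
    qed
    finally show ?thesis .
  qed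
  ultimately show ?thesis using A_fam_eq_pair_weight unfolding l_def g_def by metis
qed

lemma partition_fn_eq_sum_colouring_weights:
  fixes E :: "'e::linorder set"
  assumes "finite E"
  shows "partition_fn (n+1) (A_fam n x 0) Id_mat n E ends
           = (\<Sum>S\<in>Pow E. \<Sum>f\<in>S \<rightarrow>\<^sub>E {1..n}. colouring_weight x n S ends f)"
  unfolding partition_fn_Id_mat[OF assms] sum_PiE_split_special_colour[OF assms] colouring_weight_def
  using assms by (intro sum.cong prod.cong refl A_fam_extend_colouring) auto

lemma colours_at_eq_pair_iff:
  "finite S \<Longrightarrow> colours_at S ends f v = {#i, i#}
     \<longleftrightarrow> deg S ends v = 2 \<and> (\<forall>h\<in>halves_at S ends v. f (fst h) = i)"
  unfolding colours_at_def deg_def by (simp add: image_mset_mset_set_eq_pair_iff finite_halves_at)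

lemma colouring_weight_nonzeroD:
  assumes "colouring_weight x n S ends f \<noteq> 0" and "v < n"
  shows "\<exists>i. colours_at S ends f v = {#i, i#}"
proof (rule pair_weight_nonzeroD)
  show "pair_weight x (colours_at S ends f v) \<noteq> 0"
    using assms unfolding colouring_weight_def
    by (metis atLeastLessThan_iff finite_atLeastLessThan le0 prod_zero)
qed

lemma colouring_weight_nonzero_imp_constant:
  assumes mg: "multigraph n S ends" and conn: "edges_connected S ends"
    and nz: "colouring_weight x n S ends f \<noteq> 0" and "e \<in> S" "e' \<in> S"
  shows "f e = f e'"
proof -
  have fin: "finite S" and ends_lt: "\<forall>e\<in>S. fst (ends e) < n \<and> snd (ends e) < n"
    using mg by (auto simp: multigraph_def)
  obtain col where col: "\<And>v. v < n \<Longrightarrow> colours_at S ends f v = {#col v, col v#}"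
    using colouring_weight_nonzeroD[OF nz] by metis
  have edge_col: "f d = col (fst (ends d)) \<and> f d = col (snd (ends d))" if "d \<in> S" for d
  proof -
    have "(d, False) \<in> halves_at S ends (fst (ends d))" "(d, True) \<in> halves_at S ends (snd (ends d))"
      using that by (simp_all add: mem_halves_at)
    then show ?thesis using col colours_at_eq_pair_iff[OF fin] ends_lt that by fastforce
  qed
  have "col a = col b" if "(a, b) \<in> (adj_rel S ends)\<^sup>*" for a b
    using that
  proof (induction rule: rtrancl_induct)
    case (step b c)
    then obtain d where "d \<in> S" "ends d = (b, c) \<or> ends d = (c, b)" by (auto simp: adj_rel_def)
    then show ?case using step.IH edge_col by force
  qed simp
  moreover have "fst (ends e) \<in> edge_verts S ends" "fst (ends e') \<in> edge_verts S ends"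
    using assms by (auto simp: edge_verts_def)
  ultimately show ?thesis using conn edge_col assms unfolding edges_connected_def by metis
qed

lemma colouring_weight_constant:
  assumes "finite S" and "\<forall>v<n. deg S ends v = 2" and "\<forall>e\<in>S. f e = i"
  shows "colouring_weight x n S ends f = x i ^ n"
proof -
  have "colours_at S ends f v = {#i, i#}" if "v < n" for v
  proof -
    have "\<forall>h\<in>halves_at S ends v. f (fst h) = i" using assms(3) halves_at_endpoint by blast
    then show ?thesis using assms(1,2) that by (simp add: colours_at_eq_pair_iff)
  qed
  then show ?thesis unfolding colouring_weight_def by simp
qed

lemma sum_colouring_weights_not_two_regular:
  assumes "finite S" and "v < n" and "deg S ends v \<noteq> 2"
  shows "(\<Sum>f\<in>S \<rightarrow>\<^sub>E {1..n}. colouring_weight x n S ends f) = 0"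
proof (rule sum.neutral, rule ballI)
  fix f
  show "colouring_weight x n S ends f = 0"
  proof (rule ccontr)
    assume "colouring_weight x n S ends f \<noteq> 0"
    then obtain i where "colours_at S ends f v = {#i, i#}"
      using colouring_weight_nonzeroD \<open>v < n\<close> by blast
    then show False using assms(1,3) by (simp add: colours_at_eq_pair_iff)
  qed
qed

section \<open>Summing the weights with roots of unity\<close>

definition unity_root :: "nat \<Rightarrow> nat \<Rightarrow> complex" where
  "unity_root n j = exp (2 * pi * \<i> * of_nat j / of_nat n)"

lemma unity_root_add: "unity_root n (j + k) = unity_root n j * unity_root n k"
  unfolding unity_root_def by (simp add: exp_add[symmetric] add_divide_distrib distrib_left)

lemma unity_root_eq_iff: "n \<ge> 1 \<Longrightarrow> unity_root n j = unity_root n k \<longleftrightarrow> j mod n = k mod n"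
  unfolding unity_root_def using complex_root_unity_eq by simp

lemma unity_root_eq_1_iff: "n \<ge> 1 \<Longrightarrow> unity_root n j = 1 \<longleftrightarrow> n dvd j"
  unfolding unity_root_def using complex_root_unity_eq_1 by simp

lemma unity_root_pow: "unity_root n j ^ k = unity_root n (j * k)"
  unfolding unity_root_def by (simp add: exp_of_nat_mult[symmetric] algebra_simps)

lemma unity_root_rotate: "n \<ge> 1 \<Longrightarrow> unity_root n (j mod n + 1) = unity_root n 1 * unity_root n j"
  by (metis unity_root_add unity_root_eq_iff mod_mod_trivial mult.commute)

lemma inj_on_rotate: "inj_on (\<lambda>j::nat. j mod n + 1) {1..n}"
proof (rule inj_onI)
  fix a b assume "a \<in> {1..n}" "b \<in> {1..n}" "a mod n + 1 = b mod n + 1"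
  then show "a = b" by (cases "a = n"; cases "b = n") auto
qed

lemma sum_eq_0_if_scaled_by_permutation:
  fixes g :: "'a \<Rightarrow> 'b::field"
  assumes "finite A" and "inj_on R A" and "R ` A \<subseteq> A"
    and "\<And>a. a \<in> A \<Longrightarrow> g (R a) = c * g a" and "c \<noteq> 1"
  shows "sum g A = 0"
proof -
  have "sum g A = sum g (R ` A)" using endo_inj_surj assms(1-3) by metis
  also have "\<dots> = c * sum g A"
    using assms(2,4) by (simp add: sum.reindex sum_distrib_left)
  finally have "(1 - c) * sum g A = 0" by (simp add: algebra_simps)
  then show ?thesis using \<open>c \<noteq> 1\<close> by simp
qed

lemma sum_colouring_weights_connected:
  assumes n: "n \<ge> 1" and mg: "multigraph n S ends"
    and two_regular: "\<forall>v<n. deg S ends v = 2" and conn: "edges_connected S ends"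
  shows "(\<Sum>f\<in>S \<rightarrow>\<^sub>E {1..n}. colouring_weight (unity_root n) n S ends f) = of_nat n"
proof -
  have fin: "finite S" using mg by (simp add: multigraph_def)
  define monochrome where "monochrome i = restrict (\<lambda>_. i) S" for i :: nat
  obtain e0 where e0: "e0 \<in> S"
    using two_regular n by (fastforce simp: deg_def halves_at_def half_edges_def)
  have monochrome_PiE: "monochrome ` {1..n} \<subseteq> S \<rightarrow>\<^sub>E {1..n}" by (auto simp: monochrome_def)
  have "inj_on monochrome {1..n}"
    by (rule inj_onI) (metis monochrome_def e0 restrict_apply')
  moreover have "colouring_weight (unity_root n) n S ends (monochrome i) = 1" for i
  proof -
    have "colouring_weight (unity_root n) n S ends (monochrome i) = unity_root n i ^ n"
      using fin two_regular by (intro colouring_weight_constant) (auto simp: monochrome_def)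
    also have "\<dots> = 1" using n by (simp add: unity_root_pow unity_root_eq_1_iff)
    finally show ?thesis .
  qed
  moreover have "colouring_weight (unity_root n) n S ends f = 0"
    if "f \<in> (S \<rightarrow>\<^sub>E {1..n}) - monochrome ` {1..n}" for f
  proof (rule ccontr)
    assume nz: "colouring_weight (unity_root n) n S ends f \<noteq> 0"
    have "f e = f e0" if "e \<in> S" for e
      by (rule colouring_weight_nonzero_imp_constant[OF mg conn nz that e0])
    then have "f = monochrome (f e0)"
      using that by (auto simp: monochrome_def fun_eq_iff PiE_def extensional_def)
    then show False using that e0 by blast
  qed
  ultimately have "(\<Sum>f\<in>S \<rightarrow>\<^sub>E {1..n}. colouring_weight (unity_root n) n S ends f) = (\<Sum>i\<in>{1..n}. 1)"
    using monochrome_PiE fin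
    by (subst sum.mono_neutral_right[OF _ monochrome_PiE]) (auto simp: finite_PiE sum.reindex)
  then show ?thesis by simp
qed

lemma rtrancl_adj_rel_ends_iff:
  assumes "e \<in> S"
  shows "(a, fst (ends e)) \<in> (adj_rel S ends)\<^sup>* \<longleftrightarrow> (a, snd (ends e)) \<in> (adj_rel S ends)\<^sup>*"
proof -
  have "(fst (ends e), snd (ends e)) \<in> adj_rel S ends" "(snd (ends e), fst (ends e)) \<in> adj_rel S ends"
    using assms by (auto simp: adj_rel_def)
  then show ?thesis by (metis rtrancl_into_rtrancl)
qed

lemma edges_connected_if_reachable:
  assumes mg: "multigraph n S ends" and reach: "\<forall>u<n. (a, u) \<in> (adj_rel S ends)\<^sup>*"
  shows "edges_connected S ends"
proof -
  have "sym ((adj_rel S ends)\<^sup>*)" by (rule sym_rtrancl) (auto simp: sym_def adj_rel_def)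
  then have "(u, v) \<in> (adj_rel S ends)\<^sup>*" if "u < n" "v < n" for u v
    using reach that by (metis symD rtrancl_trans)
  then show ?thesis using mg unfolding edges_connected_def edge_verts_def multigraph_def by auto
qed

definition rotate_colours ::
  "nat \<Rightarrow> ('e \<Rightarrow> nat \<times> nat) \<Rightarrow> nat set \<Rightarrow> 'e set \<Rightarrow> ('e \<Rightarrow> nat) \<Rightarrow> 'e \<Rightarrow> nat" where
  "rotate_colours n ends U S f = restrict (\<lambda>e. if fst (ends e) \<in> U then f e mod n + 1 else f e) S"

lemma rotate_colours_PiE:
  "n \<ge> 1 \<Longrightarrow> f \<in> S \<rightarrow>\<^sub>E {1..n} \<Longrightarrow> rotate_colours n ends U S f \<in> S \<rightarrow>\<^sub>E {1..n}"
  by (auto simp: rotate_colours_def PiE_iff Suc_le_eq)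

lemma inj_on_rotate_colours: "inj_on (rotate_colours n ends U S) (S \<rightarrow>\<^sub>E {1..n})"
proof (rule inj_onI)
  fix f g assume f: "f \<in> S \<rightarrow>\<^sub>E {1..n}" and g: "g \<in> S \<rightarrow>\<^sub>E {1..n}"
    and eq: "rotate_colours n ends U S f = rotate_colours n ends U S g"
  have "f e = g e" if e: "e \<in> S" for e
  proof (cases "fst (ends e) \<in> U")
    case True
    have "rotate_colours n ends U S f e = rotate_colours n ends U S g e" using eq by simp
    then have "f e mod n + 1 = g e mod n + 1" using True e by (simp add: rotate_colours_def)
    moreover have "f e \<in> {1..n}" "g e \<in> {1..n}" using f g e by auto
    ultimately show ?thesis by (rule inj_onD[OF inj_on_rotate])
  next
    case False
    have "rotate_colours n ends U S f e = rotate_colours n ends U S g e" using eq by simp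
    then show ?thesis using False e by (simp add: rotate_colours_def)
  qed
  then show "f = g" by (rule PiE_ext[OF f g])
qed

lemma colouring_weight_rotate_colours:
  assumes n: "n \<ge> 1" and fin: "finite S" and f: "f \<in> S \<rightarrow>\<^sub>E {1..n}"
    and closed: "\<forall>e\<in>S. fst (ends e) \<in> U \<longleftrightarrow> snd (ends e) \<in> U"
  shows "colouring_weight (unity_root n) n S ends (rotate_colours n ends U S f)
           = unity_root n 1 ^ card ({0..<n} \<inter> U) * colouring_weight (unity_root n) n S ends f"
proof -
  define g where "g = rotate_colours n ends U S f"
  have g: "\<forall>e\<in>S. g e = (if fst (ends e) \<in> U then f e mod n + 1 else f e)"
    by (simp add: g_def rotate_colours_def)
  have vertex: "pair_weight (unity_root n) (colours_at S ends g v)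
      = (if v \<in> U then unity_root n 1 else 1) * pair_weight (unity_root n) (colours_at S ends f v)" for v
  proof (cases "v \<in> U")
    case True
    have "g (fst h) = f (fst h) mod n + 1" if "h \<in> halves_at S ends v" for h
      using halves_at_endpoint[OF that] closed g True by metis
    then have "colours_at S ends g v = image_mset (\<lambda>j. j mod n + 1) (colours_at S ends f v)"
      unfolding colours_at_def image_mset.compositionality
      by (intro image_mset_cong) (simp add: finite_halves_at[OF fin])
    moreover have "set_mset (colours_at S ends f v) \<subseteq> {1..n}"
      using f halves_at_endpoint finite_halves_at[OF fin] by (fastforce simp: colours_at_def)
    ultimately show ?thesis
      using True unity_root_rotate[OF n] inj_on_subset[OF inj_on_rotate]
      by (simp add: pair_weight_image_mset)
  next
    case False
    have "g (fst h) = f (fst h)" if "h \<in> halves_at S ends v" for h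
      using halves_at_endpoint[OF that] closed g False by metis
    then have "colours_at S ends g v = colours_at S ends f v"
      unfolding colours_at_def by (intro image_mset_cong) (simp add: finite_halves_at[OF fin])
    then show ?thesis using False by simp
  qed
  have "(\<Prod>v\<in>{0..<n}. if v \<in> U then unity_root n 1 else 1) = unity_root n 1 ^ card ({0..<n} \<inter> U)"
    by (simp add: prod.If_cases)
  then show ?thesis unfolding g_def[symmetric] colouring_weight_def vertex prod.distrib by simp
qed

lemma sum_colouring_weights_disconnected:
  assumes n: "n \<ge> 1" and mg: "multigraph n S ends"
    and disconn: "\<not> edges_connected S ends"
  shows "(\<Sum>f\<in>S \<rightarrow>\<^sub>E {1..n}. colouring_weight (unity_root n) n S ends f) = 0"
proof -
  define U where "U = {u. (0, u) \<in> (adj_rel S ends)\<^sup>*}"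
  define k where "k = card ({0..<n} \<inter> U)"
  have fin: "finite S" using mg by (simp add: multigraph_def)
  have closed: "\<forall>e\<in>S. fst (ends e) \<in> U \<longleftrightarrow> snd (ends e) \<in> U"
    unfolding U_def by (simp add: rtrancl_adj_rel_ends_iff)
  obtain w where "w \<in> {0..<n}" "w \<notin> {0..<n} \<inter> U"
    using edges_connected_if_reachable[OF mg] disconn unfolding U_def by auto
  then have "{0..<n} \<inter> U \<subset> {0..<n}" by blast
  then have "k < n"
    unfolding k_def by (metis psubset_card_mono finite_atLeastLessThan card_atLeastLessThan diff_zero)
  moreover have "0 \<in> {0..<n} \<inter> U" using n by (simp add: U_def)
  then have "0 < k" unfolding k_def by (auto simp: card_gt_0_iff)
  ultimately have "unity_root n 1 ^ k \<noteq> 1"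
    using n by (auto simp: unity_root_pow unity_root_eq_1_iff dest: nat_dvd_not_less)
  show ?thesis
  proof (rule sum_eq_0_if_scaled_by_permutation[where R = "rotate_colours n ends U S"])
    show "rotate_colours n ends U S ` (S \<rightarrow>\<^sub>E {1..n}) \<subseteq> S \<rightarrow>\<^sub>E {1..n}"
      by (rule image_subsetI) (rule rotate_colours_PiE[OF n])
  qed (use fin inj_on_rotate_colours colouring_weight_rotate_colours[OF n fin _ closed]
        \<open>unity_root n 1 ^ k \<noteq> 1\<close> in \<open>auto simp: finite_PiE k_def\<close>)
qed

lemma sum_colouring_weights_unity_root:
  assumes n: "n \<ge> 1" and mg: "multigraph n E ends" and "S \<subseteq> E"
  shows "(\<Sum>f\<in>S \<rightarrow>\<^sub>E {1..n}. colouring_weight (unity_root n) n S ends f)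
           = (if (\<forall>v<n. deg S ends v = 2) \<and> edges_connected S ends then of_nat n else 0)"
proof -
  have mg_S: "multigraph n S ends" using multigraph_subset[OF mg \<open>S \<subseteq> E\<close>] .
  then have "finite S" by (simp add: multigraph_def)
  then show ?thesis
    using sum_colouring_weights_not_two_regular sum_colouring_weights_connected[OF n mg_S]
      sum_colouring_weights_disconnected[OF n mg_S]
    by auto
qed

theorem corollary3:
  fixes n :: nat and E :: "('e::linorder) set" and ends :: "'e \<Rightarrow> nat \<times> nat"
  assumes "n \<ge> 1"
    and "multigraph n E ends"
    and "\<forall>v<n. deg E ends v \<ge> 1"
  shows "of_nat (card {C. is_ham_cycle n E ends C}) =
         partition_fn (n + 1)
           (A_fam n (\<lambda>j. exp (2 * pi * \<i> * of_nat j / of_nat n)) 0)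
           Id_mat n E ends / of_nat n"
proof -
  let ?ham = "\<lambda>S. (\<forall>v<n. deg S ends v = 2) \<and> edges_connected S ends"
  have fin: "finite E" using assms(2) by (simp add: multigraph_def)
  have "(\<lambda>j. exp (2 * pi * \<i> * of_nat j / of_nat n)) = unity_root n"
    by (simp add: unity_root_def fun_eq_iff)
  then have "partition_fn (n + 1) (A_fam n (\<lambda>j. exp (2 * pi * \<i> * of_nat j / of_nat n)) 0) Id_mat n E ends
      = (\<Sum>S\<in>Pow E. \<Sum>f\<in>S \<rightarrow>\<^sub>E {1..n}. colouring_weight (unity_root n) n S ends f)"
    using partition_fn_eq_sum_colouring_weights[OF fin] by simp
  also have "\<dots> = (\<Sum>S\<in>Pow E. if ?ham S then of_nat n else 0)"
    using sum_colouring_weights_unity_root[OF assms(1,2)] by (intro sum.cong) auto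
  also have "\<dots> = of_nat n * of_nat (card {S \<in> Pow E. ?ham S})"
    using fin by (simp add: sum.If_cases Int_def)
  also have "{S \<in> Pow E. ?ham S} = {C. is_ham_cycle n E ends C}"
    using is_ham_cycle_iff[OF assms(2)] by auto
  finally show ?thesis using assms(1) by simp
qed

end
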